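(* Let $n\geq 1$ be an integer and let $L_1,L_2$ be two distinct regular fibres of the $(n,1)$-Seifert fibration $\mathcal{S}_{n,1}\colon S^3\to\mathbb{C}P(1)$, $(z_1,z_2)\mapsto[z_2/z_1^{n}]$. Then there exists a smooth non-singular vector field $X_n$ on $S^3$ which is positively collinear to $H_{n,1}$ at every point of $L_1$, negatively collinear to $H_{n,1}$ at every point of $L_2$, and not collinear to $H_{n,1}$ at any point of $S^3\setminus(L_1\cup L_2)$.
   Context: $S^3=\{(z_1,z_2)\in\mathbb{C}^2: |z_1|^2+|z_2|^2=1\}$. For relatively prime integers $p\neq0$, $q>0$, the $(p,q)$-Seifert fibration is $\mathcal{S}_{p,q}(z_1,z_2)=[z_2^q/z_1^p]\in\mathbb{C}P(1)\cong S^2$; its fibres are circles, the two singular fibres being $\{z_1=0\}$ and $\{z_2=0\}$ and the others (regular fibres) being $(p,q)$-torus knots on the tori $|z_1|=a,|z_2|=b$. $H_{p,q}$ is the unit vector field tangent to the fibres of $\mathcal{S}_{p,q}$, oriented by the circle action $(z_1,z_2)\mapsto(e^{iqt}z_1,e^{ipt}z_2)$ (so $H_{1,1}(z_1,z_2)=(iz_1,iz_2)$). *)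

theory Defs
  imports "HOL-Analysis.Analysis"
begin

coinductive smooth_map :: "('a::real_normed_vector \<Rightarrow> 'b::real_normed_vector) \<Rightarrow> bool" where
  "(\<forall>x. f differentiable (at x)) \<Longrightarrow>
   (\<forall>v. smooth_map (\<lambda>x. frechet_derivative f (at x) v)) \<Longrightarrow> smooth_map f"

definition S3 :: "(complex \<times> complex) set" where
  "S3 = {z. (cmod (fst z))\<^sup>2 + (cmod (snd z))\<^sup>2 = 1}"

text \<open>Fibre of the (n,1)-Seifert fibration (z1,z2) \<mapsto> [z2 : z1^n] through the point a.\<close>
definition seifert_fibre :: "nat \<Rightarrow> complex \<times> complex \<Rightarrow> (complex \<times> complex) set" where
  "seifert_fibre n a = {z \<in> S3. snd z * fst a ^ n = snd a * fst z ^ n}"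

text \<open>Regular fibres: those other than the singular fibres {z1 = 0} and {z2 = 0}.\<close>
definition regular_fibre :: "nat \<Rightarrow> (complex \<times> complex) set \<Rightarrow> bool" where
  "regular_fibre n L \<longleftrightarrow> (\<exists>a \<in> S3. fst a \<noteq> 0 \<and> snd a \<noteq> 0 \<and> L = seifert_fibre n a)"

text \<open>Unit vector field H_{n,1} tangent to the fibres, oriented by the circle action
(z1,z2) \<mapsto> (e^{it} z1, e^{int} z2).\<close>
definition H :: "nat \<Rightarrow> complex \<times> complex \<Rightarrow> complex \<times> complex" where
  "H n z = (let V = (\<i> * fst z, \<i> * of_nat n * snd z) in (1 / norm V) *\<^sub>R V)"

end

theory Submission
  imports Defs
begin

text \<open>Put \<open>P\<^sub>a(z) = z\<^sub>2 a\<^sub>1\<^sup>n - a\<^sub>2 z\<^sub>1\<^sup>n\<close>, so that the fibre through \<open>a\<close> is the zero set of \<open>P\<^sub>a\<close>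
on \<open>S\<^sup>3\<close>; distinct regular fibres are disjoint, a regular fibre being determined by the slope
\<open>a\<^sub>2 / a\<^sub>1\<^sup>n\<close>. Let \<open>V(z) = (i z\<^sub>1, i n z\<^sub>2)\<close> be the unnormalised generator of the circle action and
\<open>j z\<close> the quaternion product, and take \<open>X = (|P\<^sub>b|\<^sup>2 - |P\<^sub>a|\<^sup>2) V + P\<^sub>a P\<^sub>b j z\<close>. It is polynomial,
hence smooth (directional derivatives of polynomial maps are polynomial), and tangent to \<open>S\<^sup>3\<close>.
The real line through \<open>V(z)\<close> meets the complex line through \<open>j z\<close> only in \<open>0\<close>: multiplying the
components by \<open>cnj z\<^sub>1\<close>, \<open>cnj z\<^sub>2\<close> and adding turns \<open>r V(z) = g j z\<close> into \<open>r i (|z\<^sub>1|\<^sup>2 + n |z\<^sub>2|\<^sup>2) = 0\<close>. Hence \<open>X\<close> is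
collinear with \<open>H\<close> exactly where \<open>P\<^sub>a P\<^sub>b = 0\<close>, i.e. on \<open>L\<^sub>1 \<union> L\<^sub>2\<close>, where its coefficient is
\<open>|P\<^sub>b|\<^sup>2 > 0\<close> on \<open>L\<^sub>1\<close> and \<open>-|P\<^sub>a|\<^sup>2 < 0\<close> on \<open>L\<^sub>2\<close>.\<close>

lemma has_derivative_frechet_derivative_real_polynomial_function:
  "real_polynomial_function p \<Longrightarrow> (p has_derivative frechet_derivative p (at x)) (at x)"
  using differentiable_at_real_polynomial_function frechet_derivative_works by blast

lemma real_polynomial_function_frechet_derivative:
  assumes "real_polynomial_function p"
  shows "real_polynomial_function (\<lambda>x. frechet_derivative p (at x) v)"
  using assms
proof (induction p rule: real_polynomial_function.induct)
  case (linear f)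
  then have "frechet_derivative f (at x) = f" for x
    by (metis frechet_derivative_at bounded_linear_imp_has_derivative)
  then show ?case by auto
next
  case (const c)
  then show ?case by (simp add: real_polynomial_function.intros(2))
next
  case (add f g)
  note df = has_derivative_frechet_derivative_real_polynomial_function[OF add.hyps(1)]
  note dg = has_derivative_frechet_derivative_real_polynomial_function[OF add.hyps(2)]
  have "frechet_derivative (\<lambda>x. f x + g x) (at x) v
        = frechet_derivative f (at x) v + frechet_derivative g (at x) v" for x
    by (simp add: frechet_derivative_at[OF has_derivative_add[OF df dg], symmetric])
  then show ?case
    using add.IH by (simp add: real_polynomial_function.intros(3))
next
  case (mult f g)
  note df = has_derivative_frechet_derivative_real_polynomial_function[OF mult.hyps(1)]
  note dg = has_derivative_frechet_derivative_real_polynomial_function[OF mult.hyps(2)]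
  have "frechet_derivative (\<lambda>x. f x * g x) (at x) v
        = f x * frechet_derivative g (at x) v + frechet_derivative f (at x) v * g x" for x
    by (simp add: frechet_derivative_at[OF has_derivative_mult[OF df dg], symmetric])
  then show ?case
    using mult.IH mult.hyps by (simp add: real_polynomial_function.intros(3,4))
qed

lemma polynomial_function_frechet_derivative:
  fixes p :: "'a::real_normed_vector \<Rightarrow> 'b::euclidean_space"
  assumes p: "polynomial_function p"
  shows "polynomial_function (\<lambda>x. frechet_derivative p (at x) v)"
  unfolding polynomial_function_def
proof (intro allI impI)
  fix h :: "'b \<Rightarrow> real"
  assume h: "bounded_linear h"
  have "(p has_derivative frechet_derivative p (at x)) (at x)" for x
    using p differentiable_at_polynomial_function frechet_derivative_works by blast
  then have "((\<lambda>x. h (p x)) has_derivative (\<lambda>v. h (frechet_derivative p (at x) v))) (at x)" for x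
    by (rule bounded_linear.has_derivative[OF h])
  then have "frechet_derivative (\<lambda>x. h (p x)) (at x) v = h (frechet_derivative p (at x) v)" for x
    using frechet_derivative_at by metis
  moreover have "real_polynomial_function (\<lambda>x. h (p x))"
    using p h by (simp add: polynomial_function_def o_def)
  ultimately show "real_polynomial_function (h \<circ> (\<lambda>x. frechet_derivative p (at x) v))"
    using real_polynomial_function_frechet_derivative[of "\<lambda>x. h (p x)" v] by (simp add: o_def)
qed

lemma polynomial_function_smooth_map:
  fixes p :: "'a::real_normed_vector \<Rightarrow> 'b::euclidean_space"
  shows "polynomial_function p \<Longrightarrow> smooth_map p"
proof (coinduction arbitrary: p rule: smooth_map.coinduct)
  case (smooth_map p)
  then show ?case
    using differentiable_at_polynomial_function polynomial_function_frechet_derivative by blast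
qed

lemma polynomial_function_compose_bounded_linear:
  "polynomial_function f \<Longrightarrow> bounded_linear h \<Longrightarrow> polynomial_function (\<lambda>x. h (f x))"
  using polynomial_function_compose[of f h] polynomial_function_bounded_linear[of h]
  by (simp add: o_def)

lemma polynomial_function_fst: "polynomial_function fst"
  by (simp add: polynomial_function_bounded_linear bounded_linear_fst)

lemma polynomial_function_snd: "polynomial_function snd"
  by (simp add: polynomial_function_bounded_linear bounded_linear_snd)

lemma polynomial_function_Pair:
  assumes "polynomial_function f" "polynomial_function g"
  shows "polynomial_function (\<lambda>x. (f x, g x))"
proof -
  have "polynomial_function (\<lambda>x. (f x, 0))"
    using polynomial_function_compose_bounded_linear[OF assms(1) bounded_linear_Pair,
        OF bounded_linear_ident bounded_linear_zero] .
  moreover have "polynomial_function (\<lambda>x. (0, g x))"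
    using polynomial_function_compose_bounded_linear[OF assms(2) bounded_linear_Pair,
        OF bounded_linear_zero bounded_linear_ident] .
  ultimately have "polynomial_function (\<lambda>x. (f x, 0) + (0, g x))"
    by (rule polynomial_function_add)
  then show ?thesis by simp
qed

lemma polynomial_function_complex_mult:
  fixes f g :: "'a::real_normed_vector \<Rightarrow> complex"
  assumes f: "polynomial_function f" and g: "polynomial_function g"
  shows "polynomial_function (\<lambda>x. f x * g x)"
proof -
  have "polynomial_function (\<lambda>x. Re (f x))" "polynomial_function (\<lambda>x. Im (f x))"
    using f by (simp_all add: polynomial_function_compose_bounded_linear bounded_linear_Re bounded_linear_Im)
  moreover have "polynomial_function (\<lambda>x. \<i> * g x)"
    using g by (simp add: polynomial_function_compose_bounded_linear bounded_linear_mult_right)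
  ultimately have "polynomial_function (\<lambda>x. Re (f x) *\<^sub>R g x + Im (f x) *\<^sub>R (\<i> * g x))"
    using g by (simp add: polynomial_function_add polynomial_function_mult)
  moreover have "Re (f x) *\<^sub>R g x + Im (f x) *\<^sub>R (\<i> * g x) = f x * g x" for x
    by (simp add: complex_eq_iff)
  ultimately show ?thesis by simp
qed

lemma polynomial_function_complex_power:
  fixes f :: "'a::real_normed_vector \<Rightarrow> complex"
  shows "polynomial_function f \<Longrightarrow> polynomial_function (\<lambda>x. f x ^ k)"
  by (induction k) (simp_all add: polynomial_function_complex_mult)

lemma polynomial_function_cmod_square:
  fixes f :: "'a::real_normed_vector \<Rightarrow> complex"
  assumes "polynomial_function f"
  shows "polynomial_function (\<lambda>x. (cmod (f x))\<^sup>2)"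
proof -
  have "real_polynomial_function (\<lambda>x. Re (f x))" "real_polynomial_function (\<lambda>x. Im (f x))"
    using assms by (simp_all add: real_polynomial_function_eq polynomial_function_compose_bounded_linear
        bounded_linear_Re bounded_linear_Im)
  then have "real_polynomial_function (\<lambda>x. (Re (f x))\<^sup>2 + (Im (f x))\<^sup>2)"
    by (simp add: power2_eq_square real_polynomial_function.intros(3,4))
  then show ?thesis
    by (simp add: real_polynomial_function_eq cmod_power2)
qed

definition seifert_poly :: "nat \<Rightarrow> complex \<times> complex \<Rightarrow> complex \<times> complex \<Rightarrow> complex" where
  "seifert_poly n a z = snd z * fst a ^ n - snd a * fst z ^ n"

lemma seifert_fibre_eq: "seifert_fibre n a = {z \<in> S3. seifert_poly n a z = 0}"
  by (auto simp: seifert_fibre_def seifert_poly_def)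

lemma polynomial_function_seifert_poly: "polynomial_function (seifert_poly n a)"
  unfolding seifert_poly_def[abs_def]
  by (intro polynomial_function_diff polynomial_function_complex_mult polynomial_function_complex_power
      polynomial_function_const polynomial_function_fst polynomial_function_snd)

lemma S3_nonzero: "z \<in> S3 \<Longrightarrow> z \<noteq> 0"
  by (auto simp: S3_def)

lemma mem_seifert_fibre_iff:
  assumes "n \<ge> 1" "fst a \<noteq> 0"
  shows "z \<in> seifert_fibre n a \<longleftrightarrow> z \<in> S3 \<and> fst z \<noteq> 0 \<and> snd z / fst z ^ n = snd a / fst a ^ n"
proof (cases "fst z = 0")
  case True
  then have "z \<in> S3 \<Longrightarrow> snd z \<noteq> 0"
    by (auto simp: S3_def)
  then show ?thesis
    using True assms by (auto simp: seifert_fibre_def zero_power)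
next
  case False
  then show ?thesis
    using assms by (auto simp: seifert_fibre_def field_simps)
qed

lemma regular_fibres_disjoint:
  assumes "n \<ge> 1" "regular_fibre n L1" "regular_fibre n L2" "L1 \<noteq> L2"
  shows "L1 \<inter> L2 = {}"
proof (rule ccontr)
  obtain a b where a: "fst a \<noteq> 0" "L1 = seifert_fibre n a" and b: "fst b \<noteq> 0" "L2 = seifert_fibre n b"
    using assms(2,3) by (auto simp: regular_fibre_def)
  assume "L1 \<inter> L2 \<noteq> {}"
  then have "snd a / fst a ^ n = snd b / fst b ^ n"
    using mem_seifert_fibre_iff[OF assms(1) a(1)] mem_seifert_fibre_iff[OF assms(1) b(1)] a(2) b(2)
    by auto
  then have "L1 = L2"
    using mem_seifert_fibre_iff[OF assms(1) a(1)] mem_seifert_fibre_iff[OF assms(1) b(1)] a(2) b(2)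
    by auto
  with assms(4) show False ..
qed

definition seifert_generator :: "nat \<Rightarrow> complex \<times> complex \<Rightarrow> complex \<times> complex" where
  "seifert_generator n z = (\<i> * fst z, \<i> * of_nat n * snd z)"

text \<open>The quaternion product \<open>g j z\<close>, identifying \<open>(z\<^sub>1, z\<^sub>2)\<close> with \<open>z\<^sub>1 + z\<^sub>2 j\<close>.\<close>
definition quat_j_mult :: "complex \<Rightarrow> complex \<times> complex \<Rightarrow> complex \<times> complex" where
  "quat_j_mult g z = (- g * cnj (snd z), g * cnj (fst z))"

lemma H_eq: "H n z = (1 / norm (seifert_generator n z)) *\<^sub>R seifert_generator n z"
  by (simp add: H_def seifert_generator_def Let_def)

lemma seifert_generator_nonzero: "n \<ge> 1 \<Longrightarrow> z \<noteq> 0 \<Longrightarrow> seifert_generator n z \<noteq> 0"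
  by (cases z) (auto simp: seifert_generator_def zero_prod_def)

lemma seifert_generator_norm_pos: "n \<ge> 1 \<Longrightarrow> z \<in> S3 \<Longrightarrow> norm (seifert_generator n z) > 0"
  using seifert_generator_nonzero S3_nonzero by simp

lemma inner_seifert_generator: "inner z (seifert_generator n z) = 0"
  by (cases z) (simp add: seifert_generator_def inner_complex_def algebra_simps)

lemma inner_quat_j_mult: "inner z (quat_j_mult g z) = 0"
  by (cases z) (simp add: quat_j_mult_def inner_complex_def algebra_simps)

lemma seifert_generator_quat_j_mult_independent:
  assumes "n \<ge> 1" "z \<noteq> 0" and eq: "r *\<^sub>R seifert_generator n z = quat_j_mult g z"
  shows "r = 0 \<and> g = 0"
proof -
  obtain z1 z2 where z: "z = (z1, z2)" by fastforce
  have e1: "of_real r * (\<i> * z1) = - g * cnj z2" and e2: "of_real r * (\<i> * of_nat n * z2) = g * cnj z1"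
    using eq by (simp_all add: z seifert_generator_def quat_j_mult_def scaleR_conv_of_real)
  have "of_real (cmod z1 ^ 2 + real n * cmod z2 ^ 2) = z1 * cnj z1 + of_nat n * (z2 * cnj z2)"
    by (simp only: of_real_add of_real_mult of_real_of_nat_eq complex_norm_square)
  then have "of_real r * \<i> * of_real (cmod z1 ^ 2 + real n * cmod z2 ^ 2)
        = of_real r * (\<i> * z1) * cnj z1 + of_real r * (\<i> * of_nat n * z2) * cnj z2"
    by (simp add: algebra_simps)
  also have "\<dots> = 0"
    by (simp add: e1 e2)
  finally have "of_real r * \<i> * of_real (cmod z1 ^ 2 + real n * cmod z2 ^ 2) = 0" .
  moreover have "cmod z1 ^ 2 + real n * cmod z2 ^ 2 > 0"
  proof -
    have "z1 \<noteq> 0 \<or> z2 \<noteq> 0"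
      using assms(2) by (simp add: z zero_prod_def)
    then show ?thesis
      using assms(1) by (auto intro: add_pos_nonneg add_nonneg_pos)
  qed
  ultimately have "r = 0"
    by (simp only: mult_eq_0_iff of_real_eq_0_iff) auto
  with e1 e2 have "g * cnj z2 = 0" "g * cnj z1 = 0"
    by auto
  with assms(2) \<open>r = 0\<close> show ?thesis
    by (auto simp: z zero_prod_def)
qed

lemma add_quat_j_mult_eq_scaleR_H_iff:
  assumes "n \<ge> 1" "z \<noteq> 0"
  shows "r *\<^sub>R seifert_generator n z + quat_j_mult g z = c *\<^sub>R H n z
         \<longleftrightarrow> g = 0 \<and> c = r * norm (seifert_generator n z)"
proof -
  define V where "V = seifert_generator n z"
  have N: "norm V > 0"
    using seifert_generator_nonzero[OF assms] by (simp add: V_def)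
  have "r *\<^sub>R V + quat_j_mult g z = c *\<^sub>R H n z \<longleftrightarrow> (c / norm V - r) *\<^sub>R V = quat_j_mult g z"
    by (auto simp: H_eq V_def[symmetric] scaleR_diff_left algebra_simps)
  also have "\<dots> \<longleftrightarrow> c / norm V = r \<and> g = 0"
    using seifert_generator_quat_j_mult_independent[OF assms, of "c / norm V - r" g]
    by (auto simp: V_def quat_j_mult_def zero_prod_def)
  also have "\<dots> \<longleftrightarrow> g = 0 \<and> c = r * norm V"
    using N by (auto simp: field_simps)
  finally show ?thesis
    by (simp add: V_def)
qed

definition seifert_twisted_field ::
    "nat \<Rightarrow> complex \<times> complex \<Rightarrow> complex \<times> complex \<Rightarrow> complex \<times> complex \<Rightarrow> complex \<times> complex" where
  "seifert_twisted_field n a b z =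
     ((cmod (seifert_poly n b z))\<^sup>2 - (cmod (seifert_poly n a z))\<^sup>2) *\<^sub>R seifert_generator n z
     + quat_j_mult (seifert_poly n a z * seifert_poly n b z) z"

lemma polynomial_function_seifert_twisted_field: "polynomial_function (seifert_twisted_field n a b)"
proof -
  have cnj_fst: "polynomial_function (\<lambda>z::complex \<times> complex. cnj (fst z))"
    and cnj_snd: "polynomial_function (\<lambda>z::complex \<times> complex. cnj (snd z))"
    by (simp_all add: polynomial_function_compose_bounded_linear[OF _ bounded_linear_cnj]
        polynomial_function_fst polynomial_function_snd)
  have generator: "polynomial_function (seifert_generator n)"
    unfolding seifert_generator_def[abs_def]
    by (intro polynomial_function_Pair polynomial_function_complex_mult polynomial_function_const
        polynomial_function_fst polynomial_function_snd)
  have p: "polynomial_function (seifert_poly n a)" "polynomial_function (seifert_poly n b)"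
    by (rule polynomial_function_seifert_poly)+
  have "polynomial_function (\<lambda>z. quat_j_mult (seifert_poly n a z * seifert_poly n b z) z)"
    unfolding quat_j_mult_def
    by (intro polynomial_function_Pair polynomial_function_complex_mult polynomial_function_minus
        p cnj_fst cnj_snd)
  moreover have "polynomial_function (\<lambda>z. ((cmod (seifert_poly n b z))\<^sup>2 - (cmod (seifert_poly n a z))\<^sup>2))"
    by (intro polynomial_function_diff polynomial_function_cmod_square p)
  ultimately show ?thesis
    unfolding seifert_twisted_field_def[abs_def]
    by (intro polynomial_function_add polynomial_function_mult generator)
qed

lemma inner_seifert_twisted_field: "inner z (seifert_twisted_field n a b z) = 0"
  by (simp add: seifert_twisted_field_def inner_add_right inner_seifert_generator inner_quat_j_mult)

lemma seifert_twisted_field_eq_scaleR_H_iff: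
  assumes "n \<ge> 1" "z \<in> S3"
  shows "seifert_twisted_field n a b z = c *\<^sub>R H n z \<longleftrightarrow>
    (z \<in> seifert_fibre n a \<or> z \<in> seifert_fibre n b) \<and>
    c = ((cmod (seifert_poly n b z))\<^sup>2 - (cmod (seifert_poly n a z))\<^sup>2) * norm (seifert_generator n z)"
  using add_quat_j_mult_eq_scaleR_H_iff[OF assms(1) S3_nonzero[OF assms(2)]] assms(2)
  by (simp add: seifert_twisted_field_def seifert_fibre_eq)

lemma seifert_twisted_field_positive_on_fibre:
  assumes "n \<ge> 1" "z \<in> seifert_fibre n a" "z \<notin> seifert_fibre n b"
  shows "\<exists>c > 0. seifert_twisted_field n a b z = c *\<^sub>R H n z"
proof -
  have z: "z \<in> S3" "seifert_poly n a z = 0" "seifert_poly n b z \<noteq> 0"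
    using assms(2,3) by (auto simp: seifert_fibre_eq)
  then show ?thesis
    using assms seifert_twisted_field_eq_scaleR_H_iff[OF assms(1) z(1)]
      seifert_generator_norm_pos[OF assms(1) z(1)] by auto
qed

lemma seifert_twisted_field_negative_on_fibre:
  assumes "n \<ge> 1" "z \<in> seifert_fibre n b" "z \<notin> seifert_fibre n a"
  shows "\<exists>c < 0. seifert_twisted_field n a b z = c *\<^sub>R H n z"
proof -
  have z: "z \<in> S3" "seifert_poly n b z = 0" "seifert_poly n a z \<noteq> 0"
    using assms(2,3) by (auto simp: seifert_fibre_eq)
  then show ?thesis
    using assms seifert_twisted_field_eq_scaleR_H_iff[OF assms(1) z(1)]
      seifert_generator_norm_pos[OF assms(1) z(1)] by (auto simp: mult_neg_pos)
qed

lemma seifert_twisted_field_nonzero: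
  assumes "n \<ge> 1" "z \<in> S3" "\<not> (z \<in> seifert_fibre n a \<and> z \<in> seifert_fibre n b)"
  shows "seifert_twisted_field n a b z \<noteq> 0"
  using assms seifert_twisted_field_eq_scaleR_H_iff[OF assms(1,2), of a b 0]
    seifert_generator_norm_pos[OF assms(1,2)] by (auto simp: seifert_fibre_eq)

theorem lemma7:
  fixes n :: nat and L1 L2 :: "(complex \<times> complex) set"
  assumes "n \<ge> 1" and "regular_fibre n L1" and "regular_fibre n L2" and "L1 \<noteq> L2"
  shows "\<exists>X :: complex \<times> complex \<Rightarrow> complex \<times> complex.
           smooth_map X \<and>
           (\<forall>z \<in> S3. inner z (X z) = 0 \<and> X z \<noteq> 0) \<and>
           (\<forall>z \<in> L1. \<exists>c > 0. X z = c *\<^sub>R H n z) \<and>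
           (\<forall>z \<in> L2. \<exists>c < 0. X z = c *\<^sub>R H n z) \<and>
           (\<forall>z \<in> S3 - (L1 \<union> L2). \<not> (\<exists>c. X z = c *\<^sub>R H n z))"
proof -
  obtain a b where L1: "L1 = seifert_fibre n a" and L2: "L2 = seifert_fibre n b"
    using assms(2,3) by (auto simp: regular_fibre_def)
  have disjoint: "L1 \<inter> L2 = {}"
    by (rule regular_fibres_disjoint[OF assms])
  show ?thesis
  proof (intro exI[of _ "seifert_twisted_field n a b"] conjI ballI)
    show "smooth_map (seifert_twisted_field n a b)"
      by (intro polynomial_function_smooth_map polynomial_function_seifert_twisted_field)
    fix z assume "z \<in> S3"
    show "inner z (seifert_twisted_field n a b z) = 0"
      by (rule inner_seifert_twisted_field)
    show "seifert_twisted_field n a b z \<noteq> 0"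
      using disjoint L1 L2 by (intro seifert_twisted_field_nonzero[OF assms(1) \<open>z \<in> S3\<close>]) blast
  next
    fix z assume "z \<in> L1"
    then show "\<exists>c > 0. seifert_twisted_field n a b z = c *\<^sub>R H n z"
      using seifert_twisted_field_positive_on_fibre[OF assms(1)] disjoint L1 L2 by blast
  next
    fix z assume "z \<in> L2"
    then show "\<exists>c < 0. seifert_twisted_field n a b z = c *\<^sub>R H n z"
      using seifert_twisted_field_negative_on_fibre[OF assms(1)] disjoint L1 L2 by blast
  next
    fix z assume "z \<in> S3 - (L1 \<union> L2)"
    then show "\<not> (\<exists>c. seifert_twisted_field n a b z = c *\<^sub>R H n z)"
      using seifert_twisted_field_eq_scaleR_H_iff[OF assms(1)] L1 L2 by auto
  qed
qed

end
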